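(* Suppose Assumption 1 holds, $f$ is convex, $F$ is $\mu$-optimal-set-strongly convex for some $\mu>0$, every $d^k$ in Algorithm 1 satisfies the $\eta$-inexactness condition for a fixed $\eta\in[0,1)$, and $\sigma I\preceq H_k\preceq MI$ for all $k$, for some $M\ge\sigma>0$. Then for all $k=0,1,2,\dots$, $$\frac{F(x^{k+1})-F^*}{F(x^k)-F^*}\le1-\frac{\alpha_k\gamma(1-\eta)\mu}{\mu+\|H_k\|}\le1-\frac{\gamma\mu}{\mu+M}\min\left\{1-\eta,\ \frac{2(1-\sqrt\eta)\beta(1-\gamma)\sigma}{L}\right\}.$$ Moreover, for every $k$ with $F(x^k)-F^*\ge(x^k-P_\Omega(x^k))^TH_k(x^k-P_\Omega(x^k))$, one also has $$\frac{F(x^{k+1})-F^*}{F(x^k)-F^*}\le1-\frac{(1-\eta)\gamma\alpha_k}{2}\le1-\frac\gamma2\min\left\{1-\eta,\ \frac{2(1-\sqrt\eta)\beta(1-\gamma)\sigma}{L}\right\}.$$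
   Context: Problem setting: $F(x)=f(x)+\psi(x)$ on $\mathbb{R}^n$, $F^*=\inf F$, $\Omega=\{x:F(x)=F^*\}$, $P_\Omega$ the Euclidean projection onto $\Omega$, $\|\cdot\|$ the Euclidean / spectral norm. Assumption 1: $f$ is differentiable with $L$-Lipschitz continuous gradient ($L>0$); $\psi:\mathbb{R}^n\to\mathbb{R}\cup\{+\infty\}$ is convex, proper and closed; $F$ is bounded below; $\Omega$ is nonempty. $F$ is $\mu$-optimal-set-strongly convex ($\mu\ge0$) if for all $x$ and all $\lambda\in[0,1]$: $F(\lambda x+(1-\lambda)P_\Omega(x))\le\lambda F(x)+(1-\lambda)F^*-\frac{\mu\lambda(1-\lambda)}2\|x-P_\Omega(x)\|^2$. For $x\in\mathbb{R}^n$ and symmetric $H$, $Q^x_H(d)\coloneqq\nabla f(x)^Td+\frac12d^THd+\psi(x+d)-\psi(x)$, $Q^*=\inf_dQ^x_H(d)$; $d$ satisfies the $\eta$-inexactness condition if $Q^x_H(d)\le(1-\eta)Q^*$. Algorithm 1: given $\beta,\gamma\in(0,1)$, $x^0$, fixed $\eta\in[0,1)$; for $k=0,1,\dots$: choose symmetric $H_k$ with $Q_k\coloneqq Q^{x^k}_{H_k}$ strongly convex; compute $d^k$ satisfying the $\eta$-inexactness condition for $Q_k$; let $\Delta_k=\nabla f(x^k)^Td^k+\psi(x^k+d^k)-\psi(x^k)$; let $\alpha_k=\beta^i$ for the smallest nonnegative integer $i$ with $F(x^k+\alpha_kd^k)\le F(x^k)+\alpha_k\gamma\Delta_k$; set $x^{k+1}=x^k+\alpha_kd^k$.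 *)

theory Defs
  imports "HOL-Analysis.Analysis" "HOL-Library.Extended_Real"
begin

definition ext_convex :: "('a::real_vector \<Rightarrow> ereal) \<Rightarrow> bool" where
  "ext_convex g \<longleftrightarrow> (\<forall>x y t. 0 \<le> t \<and> t \<le> 1 \<longrightarrow>
      g ((1 - t) *\<^sub>R x + t *\<^sub>R y) \<le> ereal (1 - t) * g x + ereal t * g y)"

definition ext_strongly_convex :: "('a::real_normed_vector \<Rightarrow> ereal) \<Rightarrow> bool" where
  "ext_strongly_convex g \<longleftrightarrow> (\<exists>c>0. \<forall>x y t. 0 \<le> t \<and> t \<le> 1 \<longrightarrow>
      g ((1 - t) *\<^sub>R x + t *\<^sub>R y) \<le> ereal (1 - t) * g x + ereal t * g y
        - ereal (c / 2 * t * (1 - t) * (norm (x - y))\<^sup>2))"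

definition ext_proper :: "('a \<Rightarrow> ereal) \<Rightarrow> bool" where
  "ext_proper g \<longleftrightarrow> (\<forall>x. g x \<noteq> -\<infinity>) \<and> (\<exists>x. g x \<noteq> \<infinity>)"

text \<open>Closed = lower semicontinuous = closed epigraph.\<close>
definition ext_closed :: "('a::topological_space \<Rightarrow> ereal) \<Rightarrow> bool" where
  "ext_closed g \<longleftrightarrow> closed {(x, t::real). g x \<le> ereal t}"

definition Fobj :: "('a \<Rightarrow> real) \<Rightarrow> ('a \<Rightarrow> ereal) \<Rightarrow> 'a \<Rightarrow> ereal" where
  "Fobj f \<psi> x = ereal (f x) + \<psi> x"

definition Fstar :: "('a \<Rightarrow> ereal) \<Rightarrow> ereal" where
  "Fstar F = Inf (range F)"

definition OptSet :: "('a \<Rightarrow> ereal) \<Rightarrow> 'a set" where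
  "OptSet F = {x. F x = Fstar F}"

definition opt_set_strongly_convex :: "real \<Rightarrow> ('a::euclidean_space \<Rightarrow> ereal) \<Rightarrow> bool" where
  "opt_set_strongly_convex \<mu> F \<longleftrightarrow> (\<forall>x l. 0 \<le> l \<and> l \<le> 1 \<longrightarrow>
     (let p = closest_point (OptSet F) x in
      F (l *\<^sub>R x + (1 - l) *\<^sub>R p) \<le> ereal l * F x + ereal (1 - l) * Fstar F
          - ereal (\<mu> * l * (1 - l) / 2 * (norm (x - p))\<^sup>2)))"

text \<open>The model Q^x_H(d), with gx = grad f(x).\<close>
definition Qmod :: "real^'n \<Rightarrow> ((real^'n) \<Rightarrow> ereal) \<Rightarrow> real^'n \<Rightarrow> real^'n^'n \<Rightarrow> real^'n \<Rightarrow> ereal" where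
  "Qmod gx \<psi> x H d = ereal (gx \<bullet> d + 1/2 * (d \<bullet> (H *v d))) + \<psi> (x + d) - \<psi> x"

definition inexact :: "real \<Rightarrow> ('a \<Rightarrow> ereal) \<Rightarrow> 'a \<Rightarrow> bool" where
  "inexact \<eta> Q d \<longleftrightarrow> Q d \<le> ereal (1 - \<eta>) * Inf (range Q)"

definition loewner_between :: "real \<Rightarrow> real^'n^'n \<Rightarrow> real \<Rightarrow> bool" where
  "loewner_between \<sigma> H M \<longleftrightarrow> (\<forall>v. \<sigma> * (norm v)\<^sup>2 \<le> v \<bullet> (H *v v) \<and> v \<bullet> (H *v v) \<le> M * (norm v)\<^sup>2)"

definition spec_norm :: "real^'n^'n \<Rightarrow> real" where
  "spec_norm H = onorm (\<lambda>v. H *v v)"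

end

theory Submission
  imports Defs
begin

text \<open>Write \<open>Q\<close> for the model at \<open>x\<^sup>k\<close>, \<open>q = inf Q\<close> and \<open>\<Delta>\<close> for the Armijo decrease of \<open>d\<^sup>k\<close>.
  Convexity of \<open>\<psi>\<close> along the segment \<open>[x, x + d]\<close> together with \<open>\<eta>\<close>-inexactness yields
  \<open>-\<Delta> \<ge> \<sigma> \<parallel>d\<parallel>\<^sup>2 / (1 + \<surd>\<eta>)\<close>; comparing with the descent lemma at the last rejected trial
  step bounds the accepted step \<open>\<alpha>\<close> from below, and the Armijo condition gives
  \<open>F(x\<^sup>k\<^sup>+\<^sup>1) - F\<^sup>* \<le> F(x\<^sup>k) - F\<^sup>* + \<alpha> \<gamma> (1 - \<eta>) q\<close>.
  By convexity of \<open>f\<close>, \<open>q \<le> F(y) - F(x) + (y - x)\<^sup>TH(y - x)/2\<close> for every \<open>y\<close>. Taking \<open>y\<close> on the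
  segment from \<open>x\<close> to its projection onto \<open>\<Omega>\<close> and using optimal-set strong convexity gives
  \<open>q \<le> -\<mu>/(\<mu> + \<parallel>H\<parallel>) (F(x) - F\<^sup>*)\<close>; taking \<open>y\<close> the projection itself gives
  \<open>q \<le> -(F(x) - F\<^sup>*)/2\<close> under the extra hypothesis of the second claim.\<close>

lemma inner_symmetric_matrix:
  fixes H :: "real^'n^'n"
  assumes "transpose H = H"
  shows "u \<bullet> (H *v v) = (H *v u) \<bullet> v"
  by (metis assms dot_lmul_matrix vector_transpose_matrix)

lemma spec_norm_nonneg: "0 \<le> spec_norm (H::real^'n^'n)"
  unfolding spec_norm_def by (rule onorm_pos_le[OF matrix_vector_mul_bounded_linear])

lemma abs_quadratic_form_le_spec_norm:
  fixes H :: "real^'n^'n"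
  shows "\<bar>v \<bullet> (H *v v)\<bar> \<le> spec_norm H * (norm v)\<^sup>2"
proof -
  have "\<bar>v \<bullet> (H *v v)\<bar> \<le> norm v * norm (H *v v)" by (rule Cauchy_Schwarz_ineq2)
  also have "\<dots> \<le> norm v * (spec_norm H * norm v)"
    unfolding spec_norm_def
    by (intro mult_left_mono onorm[OF matrix_vector_mul_bounded_linear]) auto
  finally show ?thesis by (simp add: power2_eq_square mult_ac)
qed

lemma quadratic_form_Cauchy_Schwarz:
  fixes H :: "real^'n^'n"
  assumes sym: "transpose H = H" and psd: "\<And>w. 0 \<le> w \<bullet> (H *v w)"
  shows "(u \<bullet> (H *v v))\<^sup>2 \<le> (u \<bullet> (H *v u)) * (v \<bullet> (H *v v))"
proof -
  let ?a = "u \<bullet> (H *v u)" and ?b = "u \<bullet> (H *v v)" and ?c = "v \<bullet> (H *v v)"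
  have nonneg: "0 \<le> ?a + 2 * t * ?b + t\<^sup>2 * ?c" for t
  proof -
    have "0 \<le> (u + t *\<^sub>R v) \<bullet> (H *v (u + t *\<^sub>R v))" by (rule psd)
    also have "\<dots> = ?a + t * ?b + t * (v \<bullet> (H *v u)) + t\<^sup>2 * ?c"
      by (simp add: matrix_vector_right_distrib matrix_vector_mult_scaleR inner_add_left
          inner_add_right power2_eq_square algebra_simps)
    also have "v \<bullet> (H *v u) = ?b"
      using inner_symmetric_matrix[OF sym, of v u] by (simp add: inner_commute)
    finally show ?thesis by (simp add: algebra_simps)
  qed
  show ?thesis
  proof (cases "?c = 0")
    case True
    have "?b = 0"
    proof (rule ccontr)
      assume "?b \<noteq> 0"
      then have "?a + 2 * (- (?a + 1) / (2 * ?b)) * ?b = -1" by (simp add: field_simps)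
      then show False using nonneg[of "- (?a + 1) / (2 * ?b)"] True by simp
    qed
    then show ?thesis using True by simp
  next
    case False
    then have c_pos: "?c > 0" using psd[of v] by simp
    have "0 \<le> ?a + 2 * (- ?b / ?c) * ?b + (- ?b / ?c)\<^sup>2 * ?c" by (rule nonneg)
    also have "\<dots> = ?a - ?b\<^sup>2 / ?c" using c_pos by (simp add: field_simps power2_eq_square)
    finally show ?thesis using c_pos by (simp add: field_simps)
  qed
qed

lemma spec_norm_le_loewner_upper:
  fixes H :: "real^'n^'n"
  assumes sym: "transpose H = H" and bounds: "loewner_between \<sigma> H M" and "0 \<le> \<sigma>"
  shows "spec_norm H \<le> M"
proof -
  have psd: "0 \<le> w \<bullet> (H *v w)" for w
    using bounds \<open>0 \<le> \<sigma>\<close> unfolding loewner_between_def by (meson order_trans zero_le_mult_iff zero_le_power2)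
  have upper: "w \<bullet> (H *v w) \<le> M * (norm w)\<^sup>2" for w
    using bounds unfolding loewner_between_def by auto
  have "0 \<le> M * (norm (vec 1 :: real^'n))\<^sup>2" using upper[of "vec 1"] psd[of "vec 1"] by linarith
  moreover have "(vec 1 :: real^'n) \<noteq> 0" by (simp add: vec_eq_iff)
  ultimately have M_nonneg: "0 \<le> M" by (simp add: zero_le_mult_iff)
  have "norm (H *v v) \<le> M * norm v" for v
  proof -
    let ?w = "H *v v"
    have "((norm ?w)\<^sup>2)\<^sup>2 = (?w \<bullet> (H *v v))\<^sup>2" by (simp add: power2_norm_eq_inner)
    also have "\<dots> \<le> (?w \<bullet> (H *v ?w)) * (v \<bullet> (H *v v))" by (rule quadratic_form_Cauchy_Schwarz[OF sym psd])
    also have "\<dots> \<le> (M * (norm ?w)\<^sup>2) * (v \<bullet> (H *v v))" by (intro mult_right_mono upper psd)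
    finally have scaled: "(norm ?w)\<^sup>2 * (norm ?w)\<^sup>2 \<le> (M * (v \<bullet> (H *v v))) * (norm ?w)\<^sup>2"
      by (simp add: power2_eq_square[of "(norm ?w)\<^sup>2"] mult_ac)
    have "(norm ?w)\<^sup>2 \<le> M * (v \<bullet> (H *v v))"
      using M_nonneg psd[of v] mult_right_le_imp_le[OF scaled] by (cases "?w = 0") auto
    also have "\<dots> \<le> M * (M * (norm v)\<^sup>2)" by (intro mult_left_mono upper M_nonneg)
    finally have "(norm ?w)\<^sup>2 \<le> (M * norm v)\<^sup>2" by (simp add: power2_eq_square mult_ac)
    then show ?thesis using M_nonneg by (simp add: power2_le_iff_abs_le)
  qed
  then show ?thesis unfolding spec_norm_def by (rule onorm_le)
qed

lemma has_real_derivative_along_line: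
  fixes f :: "'a::real_inner \<Rightarrow> real"
  assumes grad: "\<And>y. GDERIV f y :> gradf y"
  shows "((\<lambda>t. f (x + t *\<^sub>R e)) has_real_derivative (e \<bullet> gradf (x + t *\<^sub>R e))) (at t)"
proof -
  have "((\<lambda>t. x + t *\<^sub>R e) has_derivative (\<lambda>t. t *\<^sub>R e)) (at t)"
    by (auto intro!: derivative_eq_intros)
  moreover have "(f has_derivative (\<lambda>h. h \<bullet> gradf (x + t *\<^sub>R e))) (at (x + t *\<^sub>R e))"
    using grad unfolding gderiv_def by simp
  ultimately have "((\<lambda>t. f (x + t *\<^sub>R e)) has_derivative (\<lambda>h. (h *\<^sub>R e) \<bullet> gradf (x + t *\<^sub>R e))) (at t)"
    by (rule has_derivative_compose[unfolded o_def])
  moreover have "(\<lambda>h. (h *\<^sub>R e) \<bullet> gradf (x + t *\<^sub>R e)) = (*) (e \<bullet> gradf (x + t *\<^sub>R e))"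
    by (auto simp: fun_eq_iff)
  ultimately show ?thesis unfolding has_field_derivative_def by simp
qed

lemma convex_gradient_inequality:
  fixes f :: "'a::real_inner \<Rightarrow> real"
  assumes grad: "\<And>y. GDERIV f y :> gradf y" and cvx: "convex_on UNIV f"
  shows "f x + gradf x \<bullet> e \<le> f (x + e)"
proof -
  let ?phi = "\<lambda>t::real. f (x + t *\<^sub>R e)"
  have "convex_on UNIV ?phi"
  proof (rule convex_onI)
    fix t u s :: real assume "0 < s" "s < 1"
    have "x + ((1 - s) * t + s * u) *\<^sub>R e = (1 - s) *\<^sub>R (x + t *\<^sub>R e) + s *\<^sub>R (x + u *\<^sub>R e)"
      by (simp add: algebra_simps)
    then show "?phi ((1 - s) *\<^sub>R t + s *\<^sub>R u) \<le> (1 - s) * ?phi t + s * ?phi u"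
      using convex_onD[OF cvx, of s "x + t *\<^sub>R e" "x + u *\<^sub>R e"] \<open>0 < s\<close> \<open>s < 1\<close> by simp
  qed simp
  moreover have "(?phi has_field_derivative (e \<bullet> gradf x)) (at 0 within UNIV)"
    using has_real_derivative_along_line[OF grad, of x e 0] by simp
  ultimately have "?phi 1 - ?phi 0 \<ge> (e \<bullet> gradf x) * (1 - 0)"
    by (intro convex_on_imp_above_tangent) auto
  then show ?thesis by (simp add: inner_commute)
qed

lemma descent_lemma:
  fixes f :: "'a::real_inner \<Rightarrow> real"
  assumes grad: "\<And>y. GDERIV f y :> gradf y"
    and lip: "\<And>y z. norm (gradf y - gradf z) \<le> L * norm (y - z)"
    and "0 \<le> t"
  shows "f (x + t *\<^sub>R d) \<le> f x + t * (gradf x \<bullet> d) + L / 2 * t\<^sup>2 * (norm d)\<^sup>2"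
proof -
  define h where "h s = f (x + s *\<^sub>R d) - s * (gradf x \<bullet> d) - L / 2 * s\<^sup>2 * (norm d)\<^sup>2" for s
  have "h t \<le> h 0"
  proof (rule DERIV_nonpos_imp_nonincreasing[OF \<open>0 \<le> t\<close>])
    fix s assume s: "0 \<le> s" "s \<le> t"
    define h' where "h' = d \<bullet> gradf (x + s *\<^sub>R d) - gradf x \<bullet> d - L / 2 * (2 * s) * (norm d)\<^sup>2"
    have "(h has_real_derivative h') (at s)"
      unfolding h_def h'_def by (rule derivative_eq_intros has_real_derivative_along_line[OF grad] | simp)+
    moreover have "h' \<le> 0"
    proof -
      have "d \<bullet> gradf (x + s *\<^sub>R d) - gradf x \<bullet> d = (gradf (x + s *\<^sub>R d) - gradf x) \<bullet> d"
        by (simp add: inner_diff_left inner_diff_right inner_commute)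
      also have "\<dots> \<le> norm (gradf (x + s *\<^sub>R d) - gradf x) * norm d" by (rule norm_cauchy_schwarz)
      also have "\<dots> \<le> (L * norm (s *\<^sub>R d)) * norm d"
        using lip[of "x + s *\<^sub>R d" x] by (intro mult_right_mono) auto
      also have "\<dots> = L / 2 * (2 * s) * (norm d)\<^sup>2" using s by (simp add: power2_eq_square)
      finally show ?thesis unfolding h'_def by simp
    qed
    ultimately show "\<exists>y. DERIV h s :> y \<and> y \<le> 0" by blast
  qed
  then show ?thesis by (simp add: h_def)
qed

text \<open>In the application \<open>q\<close> is the minimum of the model \<open>Q\<close>, \<open>s = - Q d\<close> and
  \<open>a = d \<bullet> (H *v d)\<close>; convexity of \<open>\<psi>\<close> gives \<open>Q (t *\<^sub>R d) \<le> - t s - t (1 - t) a / 2\<close>.\<close>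

lemma inexactness_bound_along_segment:
  fixes \<eta> a s q :: real
  assumes eta: "0 \<le> \<eta>" "\<eta> < 1" and "0 \<le> a" and "q \<le> 0"
    and inexact: "- s \<le> (1 - \<eta>) * q"
    and segment: "\<And>t. 0 \<le> t \<Longrightarrow> t \<le> 1 \<Longrightarrow> q \<le> - t * s - 1/2 * t * (1 - t) * a"
  shows "a / (1 + sqrt \<eta>) \<le> s + a / 2"
proof (cases "\<eta> = 0")
  case True
  then have "0 \<le> s" using inexact \<open>q \<le> 0\<close> by simp
  have "a \<le> 2 * s"
  proof (rule ccontr)
    assume "\<not> a \<le> 2 * s"
    then have "0 < a" "2 * s / a < 1" using \<open>0 \<le> s\<close> by (auto simp: field_simps)
    define t where "t = (2 * s / a + 1) / 2"
    have t: "0 \<le> t" "t < 1" "2 * s < t * a"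
      using \<open>0 < a\<close> \<open>2 * s / a < 1\<close> \<open>0 \<le> s\<close> unfolding t_def by (auto simp: field_simps)
    have "(1 - t) * (1/2 * t * a) \<le> (1 - t) * s"
      using segment[of t] t inexact True by (simp add: algebra_simps)
    then show False using t by simp
  qed
  then show ?thesis using True by simp
next
  case False
  define r where "r = sqrt \<eta>"
  have r: "0 < r" "r < 1" "r\<^sup>2 = \<eta>" using False eta unfolding r_def by (auto simp: real_sqrt_lt_1_iff)
  define t where "t = 1 / (1 + r)"
  have "0 \<le> t" "t \<le> 1" using r unfolding t_def by auto
  then have "- s \<le> (1 - \<eta>) * (- t * s - 1/2 * t * (1 - t) * a)"
    using inexact mult_left_mono[OF segment, of t "1 - \<eta>"] eta by linarith
  also have "\<dots> = - ((1 - \<eta>) * t) * s - 1/2 * ((1 - \<eta>) * t) * (1 - t) * a"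
    by (simp add: algebra_simps)
  also have "(1 - \<eta>) * t = 1 - r"
    using r unfolding t_def by (simp add: field_simps power2_eq_square)
  also have "1 - t = r / (1 + r)"
    using r unfolding t_def by (simp add: field_simps)
  finally have "r * (1/2 * (1 - r) / (1 + r) * a) \<le> r * s" by (simp add: algebra_simps)
  then have "1/2 * (1 - r) / (1 + r) * a \<le> s" using r(1) mult_le_cancel_left_pos by blast
  moreover have "a / (1 + r) = 1/2 * (1 - r) / (1 + r) * a + a / 2" using r by (simp add: field_simps)
  ultimately show ?thesis unfolding r_def by linarith
qed

lemma backtracking_step_lower_bound:
  fixes \<beta> \<gamma> \<eta> \<sigma> L decr nd :: real
  assumes beta: "0 < \<beta>" "\<beta> < 1" and gamma: "\<gamma> < 1" and eta: "0 \<le> \<eta>" "\<eta> < 1"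
    and "L > 0" and "\<sigma> > 0" and "0 \<le> nd"
    and decr: "\<sigma> * nd / (1 + sqrt \<eta>) \<le> decr"
    and rejected: "i > 0 \<Longrightarrow> (1 - \<gamma>) * decr < L / 2 * \<beta> ^ (i - 1) * nd"
  shows "min (1 - \<eta>) (2 * (1 - sqrt \<eta>) * \<beta> * (1 - \<gamma>) * \<sigma> / L) \<le> \<beta> ^ i * (1 - \<eta>)"
proof (cases "i = 0")
  case True then show ?thesis by simp
next
  case False
  define r where "r = sqrt \<eta>"
  have r: "0 \<le> r" "r < 1" "r\<^sup>2 = \<eta>" using eta unfolding r_def by (auto simp: real_sqrt_lt_1_iff)
  define b where "b = \<beta> ^ (i - 1)"
  have "\<beta> ^ i = \<beta> * b" using False unfolding b_def by (metis Suc_pred' neq0_conv power_Suc)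
  have "((1 - \<gamma>) * \<sigma> / (1 + r)) * nd \<le> (1 - \<gamma>) * decr"
    using mult_left_mono[OF decr, of "1 - \<gamma>"] gamma unfolding r_def by simp
  also have "\<dots> < (L / 2 * b) * nd" using rejected False unfolding b_def by simp
  finally have "(1 - \<gamma>) * \<sigma> / (1 + r) < L / 2 * b"
    using \<open>0 \<le> nd\<close> by (meson mult_le_cancel_right not_le)
  then have "2 * (1 - \<gamma>) * \<sigma> < L * b * (1 + r)" using r by (simp add: field_simps)
  then have "(1 - r) * \<beta> * (2 * (1 - \<gamma>) * \<sigma>) < (1 - r) * \<beta> * (L * b * (1 + r))"
    using r beta by (intro mult_strict_left_mono) auto
  also have "\<dots> = L * (\<beta> ^ i * (1 - \<eta>))"
    using \<open>\<beta> ^ i = \<beta> * b\<close> r by (simp add: algebra_simps power2_eq_square)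
  finally have "2 * (1 - r) * \<beta> * (1 - \<gamma>) * \<sigma> / L < \<beta> ^ i * (1 - \<eta>)"
    using \<open>L > 0\<close> by (simp add: field_simps)
  then show ?thesis unfolding r_def by linarith
qed

lemma divide_le_one_minus:
  fixes a b c :: real
  assumes "0 \<le> b" "a \<le> b * (1 - c)" "c \<le> 1"
  shows "a / b \<le> 1 - c"
  using assms by (cases "b = 0") (auto simp: divide_le_eq mult_ac)

locale prox_newton_step =
  fixes f :: "real^'n \<Rightarrow> real" and gradf :: "real^'n \<Rightarrow> real^'n" and \<psi> :: "real^'n \<Rightarrow> ereal"
    and L \<mu> \<sigma> M \<beta> \<gamma> \<eta> \<alpha> :: real and x d :: "real^'n" and H :: "real^'n^'n"
  assumes grad: "\<And>y. GDERIV f y :> gradf y"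
    and L_pos: "L > 0"
    and lip: "\<And>y z. norm (gradf y - gradf z) \<le> L * norm (y - z)"
    and f_convex: "convex_on UNIV f"
    and psi_convex: "ext_convex \<psi>" and psi_proper: "ext_proper \<psi>"
    and F_bdd: "Fstar (Fobj f \<psi>) \<noteq> -\<infinity>"
    and mu_pos: "\<mu> > 0" and osc: "opt_set_strongly_convex \<mu> (Fobj f \<psi>)"
    and beta: "0 < \<beta>" "\<beta> < 1" and gamma: "0 < \<gamma>" "\<gamma> < 1"
    and eta: "0 \<le> \<eta>" "\<eta> < 1"
    and sigma_pos: "\<sigma> > 0"
    and H_sym: "transpose H = H"
    and H_bounds: "loewner_between \<sigma> H M"
    and x_dom: "\<psi> x \<noteq> \<infinity>"
    and d_inexact: "inexact \<eta> (Qmod (gradf x) \<psi> x H) d"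
    and linesearch: "\<exists>i. \<alpha> = \<beta> ^ i
        \<and> Fobj f \<psi> (x + \<beta> ^ i *\<^sub>R d) \<le> Fobj f \<psi> x + ereal (\<beta> ^ i * \<gamma>) *
             (ereal (gradf x \<bullet> d) + \<psi> (x + d) - \<psi> x)
        \<and> (\<forall>j<i. \<not> (Fobj f \<psi> (x + \<beta> ^ j *\<^sub>R d) \<le> Fobj f \<psi> x + ereal (\<beta> ^ j * \<gamma>) *
             (ereal (gradf x \<bullet> d) + \<psi> (x + d) - \<psi> x)))"
begin

abbreviation F where "F \<equiv> Fobj f \<psi>"
abbreviation Q where "Q \<equiv> Qmod (gradf x) \<psi> x H"

lemma F_ereal: "\<psi> y = ereal p \<Longrightarrow> F y = ereal (f y + p)"
  by (simp add: Fobj_def)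

lemma psi_ereal_if_F_le:
  assumes "F y \<le> ereal c"
  obtains p where "\<psi> y = ereal p"
proof (cases "\<psi> y")
  case PInf
  then show ?thesis using assms by (simp add: Fobj_def)
next
  case MInf
  then show ?thesis using psi_proper unfolding ext_proper_def by auto
qed

definition px where "px = real_of_ereal (\<psi> x)"

lemma psi_x: "\<psi> x = ereal px"
  using x_dom psi_proper unfolding px_def ext_proper_def by (cases "\<psi> x") auto

lemma F_x: "F x = ereal (f x + px)"
  by (rule F_ereal[OF psi_x])

lemma Fstar_le: "Fstar F \<le> F y"
  unfolding Fstar_def by (rule Inf_lower) auto

definition gap where "gap = f x + px - real_of_ereal (Fstar F)"

lemma Fstar_eq: "Fstar F = ereal (f x + px - gap)"
  using F_bdd Fstar_le[of x] F_x unfolding gap_def by (cases "Fstar F") auto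

lemma gap_nonneg: "0 \<le> gap"
  using Fstar_le[of x] F_x Fstar_eq by simp

definition q where "q = real_of_ereal (Inf (range Q))"

lemma Q_ereal: "\<psi> (x + e) = ereal p \<Longrightarrow> Q e = ereal (gradf x \<bullet> e + 1/2 * (e \<bullet> (H *v e)) + p - px)"
  by (simp add: Qmod_def psi_x)

lemma model_inf: "Inf (range Q) = ereal q" and q_nonpos: "q \<le> 0"
proof -
  have Q_d: "Q d \<le> ereal (1 - \<eta>) * Inf (range Q)"
    using d_inexact unfolding inexact_def .
  have "Q d \<noteq> -\<infinity>"
    using Q_ereal[of d] psi_proper unfolding ext_proper_def Qmod_def psi_x
    by (cases "\<psi> (x + d)") auto
  then have "Inf (range Q) \<noteq> -\<infinity>" using Q_d eta by auto
  moreover have "Inf (range Q) \<le> 0"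
    using Inf_lower[OF rangeI, of Q 0] by (simp add: Qmod_def psi_x)
  ultimately show "Inf (range Q) = ereal q" "q \<le> 0"
    unfolding q_def by (cases "Inf (range Q)"; simp)+
qed

lemma model_inf_le: "\<psi> (x + e) = ereal p \<Longrightarrow> q \<le> gradf x \<bullet> e + 1/2 * (e \<bullet> (H *v e)) + p - px"
  using Inf_lower[OF rangeI, of Q e] Q_ereal model_inf by simp

definition pd where "pd = real_of_ereal (\<psi> (x + d))"

lemma psi_x_d: "\<psi> (x + d) = ereal pd"
proof -
  have "Q d \<le> ereal ((1 - \<eta>) * q)"
    using d_inexact model_inf unfolding inexact_def by simp
  then have "Q d \<noteq> \<infinity>" by auto
  then show ?thesis
    using psi_proper unfolding pd_def ext_proper_def Qmod_def psi_x by (cases "\<psi> (x + d)") auto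
qed

definition \<Delta> where "\<Delta> = gradf x \<bullet> d + pd - px"

lemma inexactness_condition_real: "\<Delta> + 1/2 * (d \<bullet> (H *v d)) \<le> (1 - \<eta>) * q"
  using d_inexact Q_ereal[OF psi_x_d] model_inf unfolding inexact_def \<Delta>_def by simp

lemma quadratic_form_lower: "\<sigma> * (norm v)\<^sup>2 \<le> v \<bullet> (H *v v)"
  using H_bounds unfolding loewner_between_def by auto

lemma psi_segment:
  assumes "0 \<le> t" "t \<le> 1"
  obtains p where "\<psi> (x + t *\<^sub>R d) = ereal p" "p \<le> (1 - t) * px + t * pd"
proof -
  have "\<psi> ((1 - t) *\<^sub>R x + t *\<^sub>R (x + d)) \<le> ereal (1 - t) * \<psi> x + ereal t * \<psi> (x + d)"
    using psi_convex assms unfolding ext_convex_def by blast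
  moreover have "(1 - t) *\<^sub>R x + t *\<^sub>R (x + d) = x + t *\<^sub>R d" by (simp add: algebra_simps)
  ultimately have "\<psi> (x + t *\<^sub>R d) \<le> ereal ((1 - t) * px + t * pd)"
    using psi_x psi_x_d by simp
  then show ?thesis
    using that psi_proper unfolding ext_proper_def by (cases "\<psi> (x + t *\<^sub>R d)") auto
qed

lemma decrease_bound: "\<sigma> * (norm d)\<^sup>2 / (1 + sqrt \<eta>) \<le> - \<Delta>"
proof -
  define a where "a = d \<bullet> (H *v d)"
  have "\<sigma> * (norm d)\<^sup>2 \<le> a" unfolding a_def by (rule quadratic_form_lower)
  then have "0 \<le> a" using sigma_pos by (meson order_trans zero_le_mult_iff less_imp_le zero_le_power2)
  have "a / (1 + sqrt \<eta>) \<le> - (\<Delta> + 1/2 * a) + a / 2"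
  proof (rule inexactness_bound_along_segment[OF eta \<open>0 \<le> a\<close> q_nonpos])
    show "- (- (\<Delta> + 1/2 * a)) \<le> (1 - \<eta>) * q" using inexactness_condition_real unfolding a_def by simp
    fix t :: real assume t: "0 \<le> t" "t \<le> 1"
    then obtain p where p: "\<psi> (x + t *\<^sub>R d) = ereal p" "p \<le> (1 - t) * px + t * pd"
      by (rule psi_segment)
    have "q \<le> gradf x \<bullet> (t *\<^sub>R d) + 1/2 * ((t *\<^sub>R d) \<bullet> (H *v (t *\<^sub>R d))) + p - px"
      by (rule model_inf_le[OF p(1)])
    also have "\<dots> \<le> t * (gradf x \<bullet> d) + 1/2 * t\<^sup>2 * a + t * (pd - px)"
      using p(2) by (simp add: a_def matrix_vector_mult_scaleR power2_eq_square algebra_simps)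
    also have "\<dots> = - t * (- (\<Delta> + 1/2 * a)) - 1/2 * t * (1 - t) * a"
      unfolding \<Delta>_def by (simp add: field_simps power2_eq_square)
    finally show "q \<le> - t * (- (\<Delta> + 1/2 * a)) - 1/2 * t * (1 - t) * a" .
  qed
  moreover have "\<sigma> * (norm d)\<^sup>2 / (1 + sqrt \<eta>) \<le> a / (1 + sqrt \<eta>)"
    using \<open>\<sigma> * (norm d)\<^sup>2 \<le> a\<close> eta by (intro divide_right_mono) auto
  ultimately show ?thesis by simp
qed

lemma descent_along_direction:
  assumes "0 \<le> t" "t \<le> 1"
  shows "F (x + t *\<^sub>R d) \<le> ereal (f x + px + t * \<Delta> + L / 2 * t\<^sup>2 * (norm d)\<^sup>2)"
proof -
  obtain p where p: "\<psi> (x + t *\<^sub>R d) = ereal p" "p \<le> (1 - t) * px + t * pd"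
    using assms by (rule psi_segment)
  have "f (x + t *\<^sub>R d) \<le> f x + t * (gradf x \<bullet> d) + L / 2 * t\<^sup>2 * (norm d)\<^sup>2"
    by (rule descent_lemma[OF grad lip \<open>0 \<le> t\<close>])
  then show ?thesis using F_ereal[OF p(1)] p(2) unfolding \<Delta>_def by (simp add: algebra_simps)
qed

lemma armijo_condition_real:
  "F (x + c *\<^sub>R d) \<le> F x + ereal (c * \<gamma>) * (ereal (gradf x \<bullet> d) + \<psi> (x + d) - \<psi> x)
   \<longleftrightarrow> F (x + c *\<^sub>R d) \<le> ereal (f x + px + c * \<gamma> * \<Delta>)"
  using F_x psi_x psi_x_d unfolding \<Delta>_def by simp

lemma step_size_pos: "0 < \<alpha>" and step_size_le_one: "\<alpha> \<le> 1"
proof -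
  obtain i where "\<alpha> = \<beta> ^ i" using linesearch by blast
  then show "0 < \<alpha>" "\<alpha> \<le> 1" using beta by (auto simp: power_le_one)
qed

lemma F_next_le: "F (x + \<alpha> *\<^sub>R d) \<le> ereal (f x + px + \<alpha> * \<gamma> * \<Delta>)"
  using linesearch unfolding armijo_condition_real by blast

lemma step_size_bound:
  "min (1 - \<eta>) (2 * (1 - sqrt \<eta>) * \<beta> * (1 - \<gamma>) * \<sigma> / L) \<le> \<alpha> * (1 - \<eta>)"
proof -
  obtain i where i: "\<alpha> = \<beta> ^ i"
    and rejected: "\<And>j. j < i \<Longrightarrow> \<not> F (x + \<beta> ^ j *\<^sub>R d) \<le> ereal (f x + px + \<beta> ^ j * \<gamma> * \<Delta>)"
    using linesearch unfolding armijo_condition_real by blast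
  have "(1 - \<gamma>) * (- \<Delta>) < L / 2 * \<beta> ^ (i - 1) * (norm d)\<^sup>2" if "0 < i"
  proof -
    define t where "t = \<beta> ^ (i - 1)"
    have t: "0 < t" "t \<le> 1" using beta unfolding t_def by (auto simp: power_le_one)
    \<comment> \<open>the previous trial step \<open>t\<close> violated the Armijo condition, but obeys the descent lemma\<close>
    have "\<not> F (x + t *\<^sub>R d) \<le> ereal (f x + px + t * \<gamma> * \<Delta>)"
      using rejected[of "i - 1"] \<open>0 < i\<close> unfolding t_def by simp
    moreover have "F (x + t *\<^sub>R d) \<le> ereal (f x + px + t * \<Delta> + L / 2 * t\<^sup>2 * (norm d)\<^sup>2)"
      using t by (intro descent_along_direction) auto
    ultimately have "f x + px + t * \<gamma> * \<Delta> < f x + px + t * \<Delta> + L / 2 * t\<^sup>2 * (norm d)\<^sup>2"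
      by (meson ereal_less_eq(3) not_le order_trans)
    then have "t * ((1 - \<gamma>) * (- \<Delta>)) < t * (L / 2 * t * (norm d)\<^sup>2)"
      by (simp add: algebra_simps power2_eq_square)
    then show ?thesis using t(1) mult_less_cancel_left_pos unfolding t_def by blast
  qed
  then show ?thesis
    unfolding i
    by (intro backtracking_step_lower_bound[OF beta gamma(2) eta L_pos sigma_pos _ decrease_bound]) auto
qed

lemma psi_next: "\<psi> (x + \<alpha> *\<^sub>R d) \<noteq> \<infinity>"
  using F_next_le by (rule psi_ereal_if_F_le) simp

lemma gap_x: "real_of_ereal (F x - Fstar F) = gap"
  using F_x Fstar_eq by simp

lemma gap_next_le: "real_of_ereal (F (x + \<alpha> *\<^sub>R d) - Fstar F) \<le> gap + \<alpha> * \<gamma> * ((1 - \<eta>) * q)"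
proof -
  have "0 \<le> d \<bullet> (H *v d)"
    using quadratic_form_lower[of d] sigma_pos by (meson order_trans zero_le_mult_iff less_imp_le zero_le_power2)
  then have "\<alpha> * \<gamma> * \<Delta> \<le> \<alpha> * \<gamma> * ((1 - \<eta>) * q)"
    using inexactness_condition_real step_size_pos gamma by (intro mult_left_mono) auto
  moreover obtain p where "\<psi> (x + \<alpha> *\<^sub>R d) = ereal p"
    using F_next_le by (rule psi_ereal_if_F_le)
  ultimately show ?thesis
    using F_next_le F_ereal Fstar_eq by simp
qed

lemma gap_ratio_le:
  assumes "q \<le> - c * gap" "0 \<le> c" "c \<le> 1"
  shows "real_of_ereal (F (x + \<alpha> *\<^sub>R d) - Fstar F) / real_of_ereal (F x - Fstar F)
    \<le> 1 - \<alpha> * \<gamma> * (1 - \<eta>) * c"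
  unfolding gap_x
proof (rule divide_le_one_minus[OF gap_nonneg])
  have "0 \<le> \<alpha> * \<gamma> * (1 - \<eta>)" using step_size_pos gamma eta by simp
  from mult_left_mono[OF assms(1) this]
  show "real_of_ereal (F (x + \<alpha> *\<^sub>R d) - Fstar F) \<le> gap * (1 - \<alpha> * \<gamma> * (1 - \<eta>) * c)"
    using gap_next_le by (simp add: algebra_simps)
  have "\<alpha> * \<gamma> * (1 - \<eta>) * c \<le> 1 * 1 * 1 * 1"
    using step_size_pos step_size_le_one gamma eta assms(2,3) by (intro mult_mono) auto
  then show "\<alpha> * \<gamma> * (1 - \<eta>) * c \<le> 1" by simp
qed

lemma model_inf_le_objective:
  assumes "\<psi> y = ereal p"
  shows "q \<le> f y + p - (f x + px) + 1/2 * ((y - x) \<bullet> (H *v (y - x)))"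
  using model_inf_le[of "y - x" p] convex_gradient_inequality[OF grad f_convex, of x "y - x"] assms
  by simp

abbreviation x_opt where "x_opt \<equiv> closest_point (OptSet F) x"

lemma F_between_x_and_x_opt:
  assumes "0 \<le> l" "l \<le> 1"
  shows "F (l *\<^sub>R x + (1 - l) *\<^sub>R x_opt)
    \<le> ereal (f x + px - (1 - l) * gap - \<mu> * l * (1 - l) / 2 * (norm (x - x_opt))\<^sup>2)"
proof -
  have "F (l *\<^sub>R x + (1 - l) *\<^sub>R x_opt)
      \<le> ereal l * F x + ereal (1 - l) * Fstar F - ereal (\<mu> * l * (1 - l) / 2 * (norm (x - x_opt))\<^sup>2)"
    using osc assms unfolding opt_set_strongly_convex_def Let_def by blast
  then show ?thesis using F_x Fstar_eq by (simp add: algebra_simps)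
qed

lemma rate_strong_convexity: "q \<le> - (\<mu> / (\<mu> + spec_norm H)) * gap"
proof -
  define nH where "nH = spec_norm H"
  have "0 \<le> nH" unfolding nH_def by (rule spec_norm_nonneg)
  \<comment> \<open>this convex combination makes the quadratic terms of the model and of the strong convexity cancel\<close>
  define l where "l = nH / (\<mu> + nH)"
  have l: "0 \<le> l" "l \<le> 1" "1 - l = \<mu> / (\<mu> + nH)" "(1 - l) * nH = \<mu> * l"
    using \<open>0 \<le> nH\<close> mu_pos unfolding l_def by (auto simp: field_simps)
  define y where "y = l *\<^sub>R x + (1 - l) *\<^sub>R x_opt"
  define N where "N = (norm (x - x_opt))\<^sup>2"
  have F_y: "F y \<le> ereal (f x + px - (1 - l) * gap - \<mu> * l * (1 - l) / 2 * N)"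
    unfolding y_def N_def using l by (intro F_between_x_and_x_opt) auto
  then obtain py where py: "\<psi> y = ereal py" by (rule psi_ereal_if_F_le)
  have "y - x = (1 - l) *\<^sub>R (x_opt - x)" unfolding y_def by (simp add: algebra_simps)
  then have "(norm (y - x))\<^sup>2 = (1 - l)\<^sup>2 * N"
    using l(2) unfolding N_def by (simp add: norm_minus_commute power_mult_distrib)
  then have "(y - x) \<bullet> (H *v (y - x)) \<le> nH * ((1 - l)\<^sup>2 * N)"
    using abs_quadratic_form_le_spec_norm[of "y - x" H] unfolding nH_def by simp
  then have "q \<le> f y + py - (f x + px) + 1/2 * (nH * ((1 - l)\<^sup>2 * N))"
    using model_inf_le_objective[OF py] by simp
  also have "\<dots> \<le> - (1 - l) * gap + (1 - l) / 2 * N * ((1 - l) * nH - \<mu> * l)"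
  proof -
    have "f y + py \<le> f x + px - (1 - l) * gap - \<mu> * l * (1 - l) / 2 * N"
      using F_y F_ereal[OF py] by simp
    moreover have "- (\<mu> * l * (1 - l) / 2 * N) + 1/2 * (nH * ((1 - l)\<^sup>2 * N))
        = (1 - l) / 2 * N * ((1 - l) * nH - \<mu> * l)"
      by (simp add: power2_eq_square field_simps)
    ultimately show ?thesis by linarith
  qed
  finally show ?thesis using l unfolding nH_def by simp
qed

lemma rate_near_optimal:
  assumes "F x - Fstar F \<ge> ereal ((x - x_opt) \<bullet> (H *v (x - x_opt)))"
  shows "q \<le> - (1/2) * gap"
proof -
  have F_opt: "F x_opt \<le> ereal (f x + px - gap)"
    using F_between_x_and_x_opt[of 0] by simp
  then obtain p where p: "\<psi> x_opt = ereal p" by (rule psi_ereal_if_F_le)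
  have "(x_opt - x) \<bullet> (H *v (x_opt - x)) = (x - x_opt) \<bullet> (H *v (x - x_opt))"
    using matrix_vector_mult_scaleR[of H "-1" "x - x_opt"] by (simp add: inner_diff_left)
  also have "\<dots> \<le> gap" using assms F_x Fstar_eq by simp
  finally show ?thesis
    using model_inf_le_objective[OF p] F_opt F_ereal[OF p] by simp
qed

lemma step_rates:
  "(real_of_ereal (F (x + \<alpha> *\<^sub>R d) - Fstar F) / real_of_ereal (F x - Fstar F)
        \<le> 1 - \<alpha> * \<gamma> * (1 - \<eta>) * \<mu> / (\<mu> + spec_norm H)
     \<and> 1 - \<alpha> * \<gamma> * (1 - \<eta>) * \<mu> / (\<mu> + spec_norm H)
        \<le> 1 - \<gamma> * \<mu> / (\<mu> + M) * min (1 - \<eta>) (2 * (1 - sqrt \<eta>) * \<beta> * (1 - \<gamma>) * \<sigma> / L))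
   \<and> (F x - Fstar F \<ge> ereal ((x - x_opt) \<bullet> (H *v (x - x_opt)))
      \<longrightarrow> real_of_ereal (F (x + \<alpha> *\<^sub>R d) - Fstar F) / real_of_ereal (F x - Fstar F)
            \<le> 1 - (1 - \<eta>) * \<gamma> * \<alpha> / 2
        \<and> 1 - (1 - \<eta>) * \<gamma> * \<alpha> / 2
            \<le> 1 - \<gamma> / 2 * min (1 - \<eta>) (2 * (1 - sqrt \<eta>) * \<beta> * (1 - \<gamma>) * \<sigma> / L))"
proof -
  define nH where "nH = spec_norm H"
  have nH: "0 \<le> nH" "nH \<le> M"
    unfolding nH_def using spec_norm_nonneg spec_norm_le_loewner_upper[OF H_sym H_bounds] sigma_pos by auto
  define m where "m = min (1 - \<eta>) (2 * (1 - sqrt \<eta>) * \<beta> * (1 - \<gamma>) * \<sigma> / L)"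
  have m: "m \<le> \<alpha> * (1 - \<eta>)" unfolding m_def by (rule step_size_bound)
  have "\<gamma> * \<mu> / (\<mu> + M) * m \<le> \<gamma> * \<mu> / (\<mu> + M) * (\<alpha> * (1 - \<eta>))"
    using m gamma mu_pos nH by (intro mult_left_mono) auto
  also have "\<dots> \<le> \<gamma> * \<mu> / (\<mu> + nH) * (\<alpha> * (1 - \<eta>))"
    using gamma mu_pos nH step_size_pos eta by (intro mult_right_mono divide_left_mono) auto
  finally have rate1:
    "1 - \<alpha> * \<gamma> * (1 - \<eta>) * \<mu> / (\<mu> + nH) \<le> 1 - \<gamma> * \<mu> / (\<mu> + M) * m"
    by (simp add: mult_ac)
  have rate2: "1 - (1 - \<eta>) * \<gamma> * \<alpha> / 2 \<le> 1 - \<gamma> / 2 * m"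
    using mult_left_mono[OF m, of "\<gamma> / 2"] gamma by (simp add: mult_ac)
  show ?thesis
    using gap_ratio_le[OF rate_strong_convexity] gap_ratio_le[of "1/2", OF rate_near_optimal] rate1 rate2
      mu_pos nH
    unfolding nH_def m_def by (auto simp: mult_ac)
qed

end

theorem theorem2:
  fixes f :: "real^'n \<Rightarrow> real" and gradf :: "real^'n \<Rightarrow> real^'n"
    and \<psi> :: "real^'n \<Rightarrow> ereal"
    and L \<mu> \<sigma> M \<beta> \<gamma> \<eta> :: real
    and x d :: "nat \<Rightarrow> real^'n" and H :: "nat \<Rightarrow> real^'n^'n" and \<alpha> :: "nat \<Rightarrow> real"
  defines "F \<equiv> Fobj f \<psi>"
  assumes grad: "\<And>y. GDERIV f y :> gradf y"
    and L_pos: "L > 0"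
    and lip: "\<And>y z. norm (gradf y - gradf z) \<le> L * norm (y - z)"
    and psi_convex: "ext_convex \<psi>" and psi_proper: "ext_proper \<psi>" and psi_closed: "ext_closed \<psi>"
    and F_bdd: "Fstar F \<noteq> -\<infinity>"
    and Omega_ne: "OptSet F \<noteq> {}"
    and f_convex: "convex_on UNIV f"
    and mu_pos: "\<mu> > 0" and osc: "opt_set_strongly_convex \<mu> F"
    and beta: "0 < \<beta>" "\<beta> < 1" and gamma: "0 < \<gamma>" "\<gamma> < 1"
    and eta: "0 \<le> \<eta>" "\<eta> < 1"
    and sigma_pos: "\<sigma> > 0" and sigma_M: "\<sigma> \<le> M"
    and x0_dom: "\<psi> (x 0) \<noteq> \<infinity>"
    and H_sym: "\<And>k. transpose (H k) = H k"
    and H_bounds: "\<And>k. loewner_between \<sigma> (H k) M"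
    and Q_sc: "\<And>k. ext_strongly_convex (Qmod (gradf (x k)) \<psi> (x k) (H k))"
    and d_inexact: "\<And>k. inexact \<eta> (Qmod (gradf (x k)) \<psi> (x k) (H k)) (d k)"
    and linesearch: "\<And>k. \<exists>i. \<alpha> k = \<beta> ^ i
        \<and> F (x k + \<beta> ^ i *\<^sub>R d k) \<le> F (x k) + ereal (\<beta> ^ i * \<gamma>) *
             (ereal (gradf (x k) \<bullet> d k) + \<psi> (x k + d k) - \<psi> (x k))
        \<and> (\<forall>j<i. \<not> (F (x k + \<beta> ^ j *\<^sub>R d k) \<le> F (x k) + ereal (\<beta> ^ j * \<gamma>) *
             (ereal (gradf (x k) \<bullet> d k) + \<psi> (x k + d k) - \<psi> (x k))))"
    and update: "\<And>k. x (Suc k) = x k + \<alpha> k *\<^sub>R d k"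
  shows "(\<forall>k. real_of_ereal (F (x (Suc k)) - Fstar F) / real_of_ereal (F (x k) - Fstar F)
              \<le> 1 - \<alpha> k * \<gamma> * (1 - \<eta>) * \<mu> / (\<mu> + spec_norm (H k))
           \<and> 1 - \<alpha> k * \<gamma> * (1 - \<eta>) * \<mu> / (\<mu> + spec_norm (H k))
              \<le> 1 - \<gamma> * \<mu> / (\<mu> + M) * min (1 - \<eta>) (2 * (1 - sqrt \<eta>) * \<beta> * (1 - \<gamma>) * \<sigma> / L))
    \<and> (\<forall>k. F (x k) - Fstar F \<ge> ereal ((x k - closest_point (OptSet F) (x k)) \<bullet>
                 (H k *v (x k - closest_point (OptSet F) (x k))))
        \<longrightarrow> real_of_ereal (F (x (Suc k)) - Fstar F) / real_of_ereal (F (x k) - Fstar F)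
              \<le> 1 - (1 - \<eta>) * \<gamma> * \<alpha> k / 2
          \<and> 1 - (1 - \<eta>) * \<gamma> * \<alpha> k / 2
              \<le> 1 - \<gamma> / 2 * min (1 - \<eta>) (2 * (1 - sqrt \<eta>) * \<beta> * (1 - \<gamma>) * \<sigma> / L))"
proof -
  have step: "prox_newton_step f gradf \<psi> L \<mu> \<sigma> M \<beta> \<gamma> \<eta> (\<alpha> k) (x k) (d k) (H k)"
    if "\<psi> (x k) \<noteq> \<infinity>" for k
    using grad L_pos lip f_convex psi_convex psi_proper F_bdd mu_pos osc beta gamma eta sigma_pos
      H_sym H_bounds that d_inexact linesearch
    unfolding prox_newton_step_def F_def by blast
  have dom: "\<psi> (x k) \<noteq> \<infinity>" for k
  proof (induction k)
    case 0
    show ?case by (rule x0_dom)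
  next
    case (Suc k)
    show ?case using prox_newton_step.psi_next[OF step[OF Suc]] unfolding update by simp
  qed
  show ?thesis
    using prox_newton_step.step_rates[OF step[OF dom]] unfolding F_def update by blast
qed

end
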